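(* Let $R\ge 0$ and let $\lambda$ be a positive, increasing, smooth function on $[R,\infty)$. Let $g$ be a positive differentiable function on $[R,\infty)$ (with $R>0$ or $g$ defined on $(0,\infty)$) such that $X\mapsto\log g(e^X)$ is convex. Suppose there is $x_1$ with $g(x_1)=\lambda(x_1)$ and there is $x_2$ with $R\le x_2<x_1$ and $g(x_2)<\lambda(x_2)$. Then there is $x_0$ with $x_2<x_0\le x_1$, $g(x_0)=\lambda(x_0)$, and \[ \int_{x_0}^\infty g(x)\,\lambda(x)^{-1}\,dx\ge S(x_0,\lambda). \]
   Context: For a positive increasing smooth function $\lambda$ on $[R,\infty)$ and $x_0\ge R$, \[ S(x_0,\lambda)=\int_{x_0}^\infty\frac{\lambda(x_0)}{\lambda(x)}\left(\frac{x}{x_0}\right)^{x_0\lambda'(x_0)/\lambda(x_0)}dx . \] *)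

theory Defs
  imports "HOL-Analysis.Analysis"
begin

definition smooth_on :: "real set \<Rightarrow> (real \<Rightarrow> real) \<Rightarrow> bool" where
  "smooth_on S f \<longleftrightarrow> (\<exists>D :: nat \<Rightarrow> real \<Rightarrow> real.
      (\<forall>x\<in>S. D 0 x = f x) \<and>
      (\<forall>n. \<forall>x\<in>S. (D n has_real_derivative D (Suc n) x) (at x within S)))"

text \<open>The quantity S(x0, lambda), as an extended nonnegative real (the integrand is
  positive, so the integral may be +infinity).\<close>
definition S_int :: "real \<Rightarrow> (real \<Rightarrow> real) \<Rightarrow> ennreal" where
  "S_int x0 lam = (\<integral>\<^sup>+ x \<in> {x0..}.
      ennreal (lam x0 / lam x * (x / x0) powr (x0 * deriv lam x0 / lam x0)) \<partial>lborel)"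

end

theory Submission
  imports Defs
begin

text \<open>Let \<open>x\<^sub>0\<close> be the first point after \<open>x\<^sub>2\<close> where \<open>g\<close> catches up with \<open>\<lambda>\<close>.
  Since \<open>g - \<lambda>\<close> is negative just before \<open>x\<^sub>0\<close> and vanishes there, \<open>g'(x\<^sub>0) \<ge> \<lambda>'(x\<^sub>0)\<close>.
  Log-convexity of \<open>g\<close> in \<open>log x\<close> means that \<open>log g\<close> lies above its tangent at
  \<open>log x\<^sub>0\<close>, i.e. \<open>g(x) \<ge> g(x\<^sub>0) (x/x\<^sub>0)^(x\<^sub>0 g'(x\<^sub>0)/g(x\<^sub>0))\<close>; as \<open>g(x\<^sub>0) = \<lambda>(x\<^sub>0)\<close>
  and the exponent is at least \<open>x\<^sub>0 \<lambda>'(x\<^sub>0)/\<lambda>(x\<^sub>0)\<close>, dividing by \<open>\<lambda>(x)\<close> bounds the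
  integrand of \<open>S(x\<^sub>0,\<lambda>)\<close> pointwise on \<open>[x\<^sub>0,\<infinity>)\<close>.\<close>

lemma smooth_on_imp_continuous_on:
  assumes "smooth_on S f"
  shows "continuous_on S f"
proof -
  obtain D where D0: "\<forall>x\<in>S. D 0 x = f x"
    and DS: "\<forall>n. \<forall>x\<in>S. (D n has_real_derivative D (Suc n) x) (at x within S)"
    using assms unfolding smooth_on_def by blast
  have "continuous_on S (D 0)"
    using DS by (intro DERIV_continuous_on) auto
  then show ?thesis
    using D0 continuous_on_cong by force
qed

lemma smooth_on_has_real_derivative:
  assumes "smooth_on S f" and "x \<in> interior S"
  shows "(f has_real_derivative deriv f x) (at x)"
proof -
  obtain D where D0: "\<forall>x\<in>S. D 0 x = f x"
    and DS: "\<forall>n. \<forall>x\<in>S. (D n has_real_derivative D (Suc n) x) (at x within S)"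
    using assms(1) unfolding smooth_on_def by blast
  have "(D 0 has_real_derivative D 1 x) (at x)"
    using DS assms(2) interior_subset at_within_interior[OF assms(2)] by fastforce
  then have "(f has_real_derivative D 1 x) (at x)"
    by (rule has_field_derivative_transform_within_open[of _ _ _ "interior S"])
       (use D0 assms(2) interior_subset in auto)
  then show ?thesis
    using DERIV_imp_deriv by metis
qed

lemma first_zero_after_negative:
  fixes \<phi> :: "real \<Rightarrow> real"
  assumes "continuous_on {a..b} \<phi>" and "a \<le> b" and "\<phi> a < 0" and "0 \<le> \<phi> b"
  obtains c where "a < c" "c \<le> b" "\<phi> c = 0" "\<And>y. a \<le> y \<Longrightarrow> y < c \<Longrightarrow> \<phi> y < 0"
proof -
  define T where "T = {a..b} \<inter> \<phi> -` {0..}"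
  have "closed T"
    unfolding T_def using continuous_closed_preimage[OF assms(1)] by auto
  have "b \<in> T" and bdd: "bdd_below T"
    using assms(2,4) unfolding T_def by (auto intro: bdd_belowI[of _ a])
  define c where "c = Inf T"
  have "c \<in> T"
    unfolding c_def using closed_contains_Inf[OF _ bdd \<open>closed T\<close>] \<open>b \<in> T\<close> by auto
  have "c \<le> b"
    unfolding c_def using cInf_lower[OF \<open>b \<in> T\<close> bdd] .
  have neg: "\<phi> y < 0" if "a \<le> y" "y < c" for y
  proof (rule ccontr)
    assume "\<not> \<phi> y < 0"
    then have "y \<in> T"
      using that \<open>c \<le> b\<close> unfolding T_def by auto
    then show False
      using cInf_lower[OF _ bdd] that unfolding c_def by fastforce
  qed
  have "a < c"
    using \<open>c \<in> T\<close> assms(3) unfolding T_def by (cases "a = c") auto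
  have "\<phi> c = 0"
  proof -
    obtain z where z: "a \<le> z" "z \<le> c" "\<phi> z = 0"
      using IVT'[of \<phi> a 0 c] assms(3) \<open>c \<in> T\<close> \<open>a < c\<close> \<open>c \<le> b\<close>
        continuous_on_subset[OF assms(1)] unfolding T_def by fastforce
    then show ?thesis
      using neg[of z] by fastforce
  qed
  show thesis
    using that \<open>a < c\<close> \<open>c \<le> b\<close> \<open>\<phi> c = 0\<close> neg by blast
qed

lemma has_real_derivative_nonneg_at_first_zero:
  fixes \<phi> :: "real \<Rightarrow> real"
  assumes "(\<phi> has_real_derivative d) (at c)" and "\<phi> c = 0" and "a < c"
    and "\<And>y. a \<le> y \<Longrightarrow> y < c \<Longrightarrow> \<phi> y < 0"
  shows "0 \<le> d"
proof (rule ccontr)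
  assume "\<not> 0 \<le> d"
  then obtain e where e: "e > 0" "\<And>h. 0 < h \<Longrightarrow> h < e \<Longrightarrow> \<phi> c < \<phi> (c - h)"
    using has_real_derivative_neg_dec_left[OF assms(1)] by auto
  define h where "h = min (e / 2) (c - a)"
  have "0 < h" "h < e"
    using e assms(3) unfolding h_def by auto
  then show False
    using e(2)[of h] assms(2) assms(4)[of "c - h"] unfolding h_def by linarith
qed

text \<open>The tangent of \<open>X \<mapsto> ln (g (exp X))\<close> at \<open>ln x\<^sub>0\<close> has slope \<open>x\<^sub>0 g'(x\<^sub>0) / g(x\<^sub>0)\<close>;
  exponentiating the tangent-line inequality gives the power minorant.\<close>
lemma log_convex_above_tangent_powr:
  fixes g :: "real \<Rightarrow> real"
  assumes cvx: "convex_on A (\<lambda>X. ln (g (exp X)))" and "connected A"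
    and "ln x0 \<in> interior A" and "ln x \<in> A"
    and g': "(g has_real_derivative b) (at x0)"
    and "0 < x0" "0 < x" "0 < g x0" "0 < g x"
  shows "g x0 * (x / x0) powr (x0 * b / g x0) \<le> g x"
proof -
  define c where "c = x0 * b / g x0"
  have "(g has_real_derivative b) (at (exp (ln x0)))"
    using g' \<open>0 < x0\<close> by simp
  from DERIV_chain2[OF this DERIV_exp]
  have "((\<lambda>X. g (exp X)) has_real_derivative b * x0) (at (ln x0))"
    using \<open>0 < x0\<close> by simp
  moreover have "(ln has_real_derivative 1 / g (exp (ln x0))) (at (g (exp (ln x0))))"
    using DERIV_ln[of "g x0"] \<open>0 < x0\<close> \<open>0 < g x0\<close> by (simp add: divide_inverse)
  ultimately have "((\<lambda>X. ln (g (exp X))) has_real_derivative c) (at (ln x0))"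
    using DERIV_chain2 \<open>0 < x0\<close> unfolding c_def by (fastforce simp: field_simps)
  then have "c * (ln x - ln x0) \<le> ln (g (exp (ln x))) - ln (g (exp (ln x0)))"
    by (rule convex_on_imp_above_tangent[OF cvx assms(2,3,4) has_field_derivative_at_within])
  then have "exp (c * (ln x - ln x0)) \<le> exp (ln (g x) - ln (g x0))"
    using \<open>0 < x0\<close> \<open>0 < x\<close> by simp
  also have "\<dots> = g x / g x0"
    using \<open>0 < g x0\<close> \<open>0 < g x\<close> by (simp add: exp_diff)
  finally have "exp (c * (ln x - ln x0)) \<le> g x / g x0" .
  moreover have "exp (c * (ln x - ln x0)) = (x / x0) powr c"
    using \<open>0 < x0\<close> \<open>0 < x\<close> by (simp add: powr_def ln_div mult.commute)
  ultimately show ?thesis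
    using \<open>0 < g x0\<close> unfolding c_def by (simp add: field_simps)
qed

lemma ln_image_greaterThan:
  fixes r :: real
  assumes "0 < r"
  shows "ln ` {r<..} = {ln r<..}"
proof
  show "{ln r<..} \<subseteq> ln ` {r<..}"
  proof
    fix X assume "X \<in> {ln r<..}"
    then have "exp X \<in> {r<..}"
      using assms exp_less_cancel_iff[of "ln r" X] by auto
    then show "X \<in> ln ` {r<..}"
      by (metis image_eqI ln_exp)
  qed
qed (use assms in auto)

lemma S_int_le_of_power_minorant:
  fixes lam g :: "real \<Rightarrow> real"
  assumes "0 < x0" and lam_pos: "\<And>x. x0 \<le> x \<Longrightarrow> 0 < lam x"
    and "g x0 = lam x0" and "deriv lam x0 \<le> b"
    and minorant: "\<And>x. x0 \<le> x \<Longrightarrow> g x0 * (x / x0) powr (x0 * b / g x0) \<le> g x"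
  shows "S_int x0 lam \<le> (\<integral>\<^sup>+ x \<in> {x0..}. ennreal (g x / lam x) \<partial>lborel)"
proof -
  have integrand_le: "lam x0 / lam x * (x / x0) powr (x0 * deriv lam x0 / lam x0) \<le> g x / lam x"
    if "x0 \<le> x" for x
  proof -
    have "lam x0 * (x / x0) powr (x0 * deriv lam x0 / lam x0)
          \<le> g x0 * (x / x0) powr (x0 * b / g x0)"
      using assms(1,3,4) lam_pos[of x0] that
      by (auto intro!: powr_mono divide_right_mono mult_left_mono)
    also have "\<dots> \<le> g x"
      using minorant that .
    finally show ?thesis
      using lam_pos[OF that] by (simp add: divide_right_mono)
  qed
  show ?thesis
    unfolding S_int_def
  proof (intro nn_integral_mono)
    fix x
    show "ennreal (lam x0 / lam x * (x / x0) powr (x0 * deriv lam x0 / lam x0)) * indicator {x0..} x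
          \<le> ennreal (g x / lam x) * indicator {x0..} x"
      using ennreal_leI[OF integrand_le] by (cases "x0 \<le> x") simp_all
  qed
qed

theorem lemma4p1:
  fixes R x1 x2 :: real and lam g :: "real \<Rightarrow> real"
  assumes "R \<ge> 0"
    and lam_pos: "\<forall>x\<in>{R..}. lam x > 0"
    and lam_incr: "mono_on {R..} lam"
    and lam_smooth: "smooth_on {R..} lam"
    and g_pos: "\<forall>x\<in>{x. 0 < x \<and> R \<le> x}. g x > 0"
    and g_diff: "g differentiable_on {x. 0 < x \<and> R \<le> x}"
    and g_logconvex: "convex_on (ln ` {x. 0 < x \<and> R \<le> x}) (\<lambda>X. ln (g (exp X)))"
    and x1: "R \<le> x1" "g x1 = lam x1"
    and x2: "0 < x2" "R \<le> x2" "x2 < x1" "g x2 < lam x2"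
  shows "\<exists>x0. x2 < x0 \<and> x0 \<le> x1 \<and> g x0 = lam x0 \<and>
           (\<integral>\<^sup>+ x \<in> {x0..}. ennreal (g x / lam x) \<partial>lborel) \<ge> S_int x0 lam"
proof -
  define S where "S = {x. 0 < x \<and> R \<le> x}"
  have "{x2<..} \<subseteq> S" and "{x2..x1} \<subseteq> S" and "{x2..x1} \<subseteq> {R..}"
    using x2 unfolding S_def by auto
  have "continuous_on {x2..x1} (\<lambda>x. g x - lam x)"
    using continuous_on_subset[OF differentiable_imp_continuous_on[OF g_diff[folded S_def]]]
      continuous_on_subset[OF smooth_on_imp_continuous_on[OF lam_smooth]]
      \<open>{x2..x1} \<subseteq> S\<close> \<open>{x2..x1} \<subseteq> {R..}\<close> by (intro continuous_intros)
  then obtain x0 where x0: "x2 < x0" "x0 \<le> x1" "g x0 - lam x0 = 0"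
    and below: "\<And>y. x2 \<le> y \<Longrightarrow> y < x0 \<Longrightarrow> g y - lam y < 0"
    by (rule first_zero_after_negative) (use x1 x2 in auto)
  have "x0 \<in> interior S"
    using interior_mono[OF \<open>{x2<..} \<subseteq> S\<close>] x0(1) by (auto simp: interior_open)
  then have "g differentiable (at x0)"
    using g_diff at_within_interior[of x0 S] interior_subset
    unfolding S_def[symmetric] differentiable_on_def by fastforce
  then obtain b where g': "(g has_real_derivative b) (at x0)"
    using DERIV_deriv_iff_real_differentiable by blast
  have lam': "(lam has_real_derivative deriv lam x0) (at x0)"
    using smooth_on_has_real_derivative[OF lam_smooth] x0(1) x2 by simp
  have "deriv lam x0 \<le> b"
    using has_real_derivative_nonneg_at_first_zero[OF DERIV_diff[OF g' lam'] x0(3,1) below]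
    by simp
  have cvx: "convex_on {ln x2<..} (\<lambda>X. ln (g (exp X)))"
    using convex_on_subset[OF g_logconvex[folded S_def] image_mono[OF \<open>{x2<..} \<subseteq> S\<close>]]
      ln_image_greaterThan[OF x2(1)] by simp
  have "g x0 * (x / x0) powr (x0 * b / g x0) \<le> g x" if "x0 \<le> x" for x
    by (rule log_convex_above_tangent_powr[OF cvx _ _ _ g'])
       (use that x0(1) x2 g_pos in \<open>auto simp: interior_open\<close>)
  then have "S_int x0 lam \<le> (\<integral>\<^sup>+ x \<in> {x0..}. ennreal (g x / lam x) \<partial>lborel)"
    using S_int_le_of_power_minorant[of x0 lam g b] \<open>deriv lam x0 \<le> b\<close> lam_pos x0 x2 by auto
  then show ?thesis
    using x0 by auto
qed

end
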